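(* Let $\alpha=\beta\otimes\gamma:A^{\Delta}\to(H,V)\circ(H',V')$ be a homomorphism, where $(H,V),(H',V')$ are finite forest algebras with idempotent and commutative horizontal monoids, $\beta:A^{\Delta}\to(H,V)$ is nonconfusing, and $\gamma:(A\times H)^{\Delta}\to(H',V')$ is 1-definite. Then $\alpha$ is nonconfusing.
   Context: $A^{\Delta}$: free forest algebra of forests (finite ordered sequences of finite ordered labelled trees, under concatenation) and contexts (forests with one hole) over $A$. Forest algebra: additive monoid $H$, monoid $V$ acting faithfully on the left, containing $g\mapsto g+h$, $g\mapsto h+g$. Wreath product $(H,V)\circ(H',V')=(H\times H',V\times V'^{H})$ with $(v,f)(h,h')=(vh,f(h)h')$; $\beta\otimes\gamma$ maps $a$ to $(\beta(a),h\mapsto\gamma(a,h))$, so $\beta\otimes\gamma(s)=(\beta(s),\gamma(s^\beta))$ with $s^\beta$ relabeling each node with subtree $at$ by $(a,\beta(t))$. $\gamma$ is 1-definite if $\gamma(s)$ depends only on the set of labels of the root nodes of $s$. Reachability: $h\le h'$ iff $h=vh'$ for some $v$; classes of mutual reachability. For a homomorphism $\delta$ and class $\Gamma$, $\delta_\Gamma$ is the quotient identifying $\{h:h\not>\Gamma\}$ to one absorbing $\infty$; $s^{\delta_\Gamma}$ relabels nodes with subtree $at$ by $(a,\delta_\Gamma(t))$. $\sim_k$ on forests over an alphabet $B$: $\sim_0$ total; $s\sim_{k+1}s'$ iff the sets $\{(b_i,[s_i]_{\sim_k})\}$ for $s=\sum b_is_i$ and for $s'$ coincide. $s_1\equiv_{\delta,k,\Gamma}s_2$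 iff $(s_1)^{\delta_\Gamma}\sim_k(s_2)^{\delta_\Gamma}$ and $\delta(s_1),\delta(s_2)\in\Gamma$. $\delta$ is nonconfusing if there is $k>0$ such that for every reachability class $\Gamma$ of its target, $s_1\equiv_{\delta,k,\Gamma}s_2$ implies $\delta(s_1)=\delta(s_2)$. *)

theory Defs
  imports Main
begin

datatype 'a tree = Node (root: 'a) (children: "'a tree list")

type_synonym 'a forest = "'a tree list"

text \<open>A forest is a finite list of trees; forest concatenation (the horizontal
operation of the free forest algebra) is list append, the empty forest is [].\<close>

text \<open>A forest algebra (H,V): the horizontal monoid H is a type with operation pl
and unit z; V is a set of transformations of H (so the action is faithful by
construction) which is a monoid under composition and contains g\<mapsto>g+h, g\<mapsto>h+g.\<close>

definition forest_algebra :: "('h \<Rightarrow> 'h \<Rightarrow> 'h) \<Rightarrow> 'h \<Rightarrow> ('h \<Rightarrow> 'h) set \<Rightarrow> bool" where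
  "forest_algebra pl z V \<longleftrightarrow>
     (\<forall>a b c. pl (pl a b) c = pl a (pl b c)) \<and>
     (\<forall>a. pl z a = a \<and> pl a z = a) \<and>
     id \<in> V \<and> (\<forall>v\<in>V. \<forall>w\<in>V. v \<circ> w \<in> V) \<and>
     (\<forall>h. (\<lambda>g. pl g h) \<in> V \<and> (\<lambda>g. pl h g) \<in> V)"

definition idem_comm :: "('h \<Rightarrow> 'h \<Rightarrow> 'h) \<Rightarrow> bool" where
  "idem_comm pl \<longleftrightarrow> (\<forall>h. pl h h = h) \<and> (\<forall>g h. pl g h = pl h g)"

text \<open>A homomorphism A^Delta \<rightarrow> (H,V) is determined by the images lab a \<in> V of the
one-node contexts a\<box>; its value on forests is computed as follows.\<close>

primrec evalT :: "('h \<Rightarrow> 'h \<Rightarrow> 'h) \<Rightarrow> 'h \<Rightarrow> ('a \<Rightarrow> 'h \<Rightarrow> 'h) \<Rightarrow> 'a tree \<Rightarrow> 'h" where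
  "evalT pl z lab (Node a ts) = lab a (foldr pl (map (evalT pl z lab) ts) z)"

definition evalF :: "('h \<Rightarrow> 'h \<Rightarrow> 'h) \<Rightarrow> 'h \<Rightarrow> ('a \<Rightarrow> 'h \<Rightarrow> 'h) \<Rightarrow> 'a forest \<Rightarrow> 'h" where
  "evalF pl z lab s = foldr pl (map (evalT pl z lab) s) z"

definition is_hom :: "('h \<Rightarrow> 'h) set \<Rightarrow> ('a \<Rightarrow> 'h \<Rightarrow> 'h) \<Rightarrow> bool" where
  "is_hom V lab \<longleftrightarrow> (\<forall>a. lab a \<in> V)"

primrec relabT :: "('a forest \<Rightarrow> 'c) \<Rightarrow> 'a tree \<Rightarrow> ('a \<times> 'c) tree" where
  "relabT f (Node a ts) = Node (a, f ts) (map (relabT f) ts)"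

definition relab :: "('a forest \<Rightarrow> 'c) \<Rightarrow> 'a forest \<Rightarrow> ('a \<times> 'c) forest" where
  "relab f s = map (relabT f) s"

definition one_definite :: "('h \<Rightarrow> 'h \<Rightarrow> 'h) \<Rightarrow> 'h \<Rightarrow> ('b \<Rightarrow> 'h \<Rightarrow> 'h) \<Rightarrow> bool" where
  "one_definite pl z lab \<longleftrightarrow>
     (\<forall>s t :: 'b forest. set (map root s) = set (map root t) \<longrightarrow> evalF pl z lab s = evalF pl z lab t)"

definition wr_plus :: "('h \<Rightarrow> 'h \<Rightarrow> 'h) \<Rightarrow> ('g \<Rightarrow> 'g \<Rightarrow> 'g) \<Rightarrow> ('h \<times> 'g) \<Rightarrow> ('h \<times> 'g) \<Rightarrow> ('h \<times> 'g)" where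
  "wr_plus pl pl' p q = (pl (fst p) (fst q), pl' (snd p) (snd q))"

definition wr_V :: "('h \<Rightarrow> 'h) set \<Rightarrow> ('g \<Rightarrow> 'g) set \<Rightarrow> (('h \<times> 'g) \<Rightarrow> ('h \<times> 'g)) set" where
  "wr_V V V' = {(\<lambda>p. (v (fst p), f (fst p) (snd p))) | v f. v \<in> V \<and> (\<forall>h. f h \<in> V')}"

definition tensor :: "('a \<Rightarrow> 'h \<Rightarrow> 'h) \<Rightarrow> ('a \<times> 'h \<Rightarrow> 'g \<Rightarrow> 'g) \<Rightarrow> 'a \<Rightarrow> ('h \<times> 'g) \<Rightarrow> ('h \<times> 'g)" where
  "tensor \<beta> \<gamma> a = (\<lambda>p. (\<beta> a (fst p), \<gamma> (a, fst p) (snd p)))"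

definition reach :: "('h \<Rightarrow> 'h) set \<Rightarrow> 'h \<Rightarrow> 'h \<Rightarrow> bool" where
  "reach V h h' \<longleftrightarrow> (\<exists>v\<in>V. h = v h')"

definition reach_classes :: "('h \<Rightarrow> 'h) set \<Rightarrow> 'h set set" where
  "reach_classes V = {{g. reach V g h \<and> reach V h g} | h. True}"

definition above :: "('h \<Rightarrow> 'h) set \<Rightarrow> 'h \<Rightarrow> 'h set \<Rightarrow> bool" where
  "above V h \<Gamma> \<longleftrightarrow> (\<exists>g\<in>\<Gamma>. reach V g h) \<and> h \<notin> \<Gamma>"

text \<open>delta_Gamma: values not above Gamma collapse to the absorbing element None (= infinity).\<close>

definition delta_cls :: "('h \<Rightarrow> 'h \<Rightarrow> 'h) \<Rightarrow> 'h \<Rightarrow> ('h \<Rightarrow> 'h) set \<Rightarrow> ('a \<Rightarrow> 'h \<Rightarrow> 'h)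
    \<Rightarrow> 'h set \<Rightarrow> 'a forest \<Rightarrow> 'h option" where
  "delta_cls pl z V lab \<Gamma> t =
     (if above V (evalF pl z lab t) \<Gamma> then Some (evalF pl z lab t) else None)"

fun simk :: "nat \<Rightarrow> 'b forest \<Rightarrow> 'b forest \<Rightarrow> bool" where
  "simk 0 s s' = True"
| "simk (Suc k) s s' =
     ((\<forall>t\<in>set s. \<exists>t'\<in>set s'. root t = root t' \<and> simk k (children t) (children t')) \<and>
      (\<forall>t'\<in>set s'. \<exists>t\<in>set s. root t = root t' \<and> simk k (children t) (children t')))"

definition equiv_dkG :: "('h \<Rightarrow> 'h \<Rightarrow> 'h) \<Rightarrow> 'h \<Rightarrow> ('h \<Rightarrow> 'h) set \<Rightarrow> ('a \<Rightarrow> 'h \<Rightarrow> 'h)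
    \<Rightarrow> nat \<Rightarrow> 'h set \<Rightarrow> 'a forest \<Rightarrow> 'a forest \<Rightarrow> bool" where
  "equiv_dkG pl z V lab k \<Gamma> s1 s2 \<longleftrightarrow>
     simk k (relab (delta_cls pl z V lab \<Gamma>) s1) (relab (delta_cls pl z V lab \<Gamma>) s2) \<and>
     evalF pl z lab s1 \<in> \<Gamma> \<and> evalF pl z lab s2 \<in> \<Gamma>"

definition nonconfusing :: "('h \<Rightarrow> 'h \<Rightarrow> 'h) \<Rightarrow> 'h \<Rightarrow> ('h \<Rightarrow> 'h) set \<Rightarrow> ('a \<Rightarrow> 'h \<Rightarrow> 'h) \<Rightarrow> bool" where
  "nonconfusing pl z V lab \<longleftrightarrow>
     (\<exists>k>0. \<forall>\<Gamma>\<in>reach_classes V. \<forall>s1 s2.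
        equiv_dkG pl z V lab k \<Gamma> s1 s2 \<longrightarrow> evalF pl z lab s1 = evalF pl z lab s2)"

end

theory Submission
  imports Defs
begin

text \<open>Let \<open>\<Gamma>\<close> be a reachability class of the wreath product and \<open>\<Delta>\<close> the class of its
first component. For every forest \<open>t\<close> from whose value \<open>\<alpha>(t)\<close> the class \<open>\<Gamma>\<close> is reachable, the
label \<open>\<beta>\<^sub>\<Delta>(t)\<close> is a function of the label \<open>\<alpha>\<^sub>\<Gamma>(t)\<close>. Hence \<open>\<sim>\<^sub>k\<close>-equivalence of the
\<open>\<alpha>\<^sub>\<Gamma>\<close>-relabellings of two forests with values in \<open>\<Gamma>\<close> implies \<open>\<sim>\<^sub>k\<close>-equivalence of their
\<open>\<beta>\<^sub>\<Delta>\<close>-relabellings, and nonconfusion of \<open>\<beta>\<close> at level \<open>k\<close> yields \<open>\<beta>(s\<^sub>1) = \<beta>(s\<^sub>2)\<close>.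
At level \<open>k+1\<close> the root trees \<open>a t\<close> of \<open>s\<^sub>1\<close> and \<open>s\<^sub>2\<close> are matched with equal
\<open>\<alpha>\<^sub>\<Gamma>\<close>-labels and \<open>\<sim>\<^sub>k\<close>-equivalent children, so the same argument (or equality of \<open>\<alpha>(t)\<close>,
when the label is not \<open>\<infinity>\<close>) shows that \<open>s\<^sub>1\<^sup>\<beta>\<close> and \<open>s\<^sub>2\<^sup>\<beta>\<close> have the same root labels,
which the 1-definite \<open>\<gamma>\<close> cannot tell apart. So \<open>\<alpha>\<close> is nonconfusing with constant \<open>k+1\<close>.\<close>

lemma simk_sym: "simk k s s' \<Longrightarrow> simk k s' s"
  by (induction k arbitrary: s s') (simp, simp, metis)

lemma simk_Suc_imp: "simk (Suc k) s s' \<Longrightarrow> simk k s s'"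
proof (induction k arbitrary: s s')
  case (Suc k)
  then show ?case
    unfolding simk.simps(2)[of "Suc k"] simk.simps(2)[of k] by blast
qed simp

lemma simk_map_tree: "simk k s s' \<Longrightarrow> simk k (map (map_tree f) s) (map (map_tree f) s')"
  by (induction k arbitrary: s s') (simp, simp add: tree.map_sel, metis)

lemma foldr_wr_plus:
  "foldr (wr_plus pl pl') xs (z, z') = (foldr pl (map fst xs) z, foldr pl' (map snd xs) z')"
  by (induction xs) (simp_all add: wr_plus_def)

lemma evalT_tensor:
  "evalT (wr_plus pl pl') (z, z') (tensor \<beta> \<gamma>) t
     = (evalT pl z \<beta> t, evalT pl' z' \<gamma> (relabT (evalF pl z \<beta>) t))"
  by (induction t) (simp add: foldr_wr_plus tensor_def evalF_def comp_def cong: map_cong)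

lemma evalF_tensor:
  "evalF (wr_plus pl pl') (z, z') (tensor \<beta> \<gamma>) s
     = (evalF pl z \<beta> s, evalF pl' z' \<gamma> (relab (evalF pl z \<beta>) s))"
  by (simp add: evalF_def relab_def foldr_wr_plus evalT_tensor comp_def)

lemma forest_algebra_wr:
  assumes "forest_algebra pl z V" and "forest_algebra pl' z' V'"
  shows "forest_algebra (wr_plus pl pl') (z, z') (wr_V V V')"
proof -
  have pair: "(\<lambda>p. (v (fst p), f (fst p) (snd p))) \<in> wr_V V V'" if "v \<in> V" "\<forall>h. f h \<in> V'" for v f
    using that unfolding wr_V_def by blast
  have "id \<in> wr_V V V'"
    using pair[of id "\<lambda>_. id"] assms by (simp add: forest_algebra_def id_def)
  moreover have "w1 \<circ> w2 \<in> wr_V V V'" if w1: "w1 \<in> wr_V V V'" and w2: "w2 \<in> wr_V V V'" for w1 w2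
  proof -
    obtain v1 f1 where "w1 = (\<lambda>p. (v1 (fst p), f1 (fst p) (snd p)))" "v1 \<in> V" "\<forall>h. f1 h \<in> V'"
      using w1 unfolding wr_V_def by blast
    moreover obtain v2 f2 where "w2 = (\<lambda>p. (v2 (fst p), f2 (fst p) (snd p)))" "v2 \<in> V" "\<forall>h. f2 h \<in> V'"
      using w2 unfolding wr_V_def by blast
    ultimately show ?thesis
      using pair[of "v1 \<circ> v2" "\<lambda>h. f1 (v2 h) \<circ> f2 h"] assms
      by (simp add: forest_algebra_def comp_def)
  qed
  moreover have "(\<lambda>p. wr_plus pl pl' p q) \<in> wr_V V V'" "(\<lambda>p. wr_plus pl pl' q p) \<in> wr_V V V'" for q
    using pair[of "\<lambda>g. pl g (fst q)" "\<lambda>_ g. pl' g (snd q)"]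
      pair[of "\<lambda>g. pl (fst q) g" "\<lambda>_ g. pl' (snd q) g"] assms
    by (simp_all add: forest_algebra_def wr_plus_def)
  ultimately show ?thesis
    using assms by (simp add: forest_algebra_def wr_plus_def)
qed

lemma is_hom_tensor: "is_hom V \<beta> \<Longrightarrow> is_hom V' \<gamma> \<Longrightarrow> is_hom (wr_V V V') (tensor \<beta> \<gamma>)"
  unfolding is_hom_def tensor_def wr_V_def
  by (blast intro: exI[where x="\<lambda>h. \<gamma> (a, h)" for a])

lemma reach_refl:
  assumes "forest_algebra pl z V"
  shows "reach V h h"
proof -
  have "id \<in> V" using assms by (simp add: forest_algebra_def)
  then show ?thesis unfolding reach_def by (metis id_apply)
qed

lemma reach_trans:
  assumes "forest_algebra pl z V" and "reach V x y" and "reach V y u"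
  shows "reach V x u"
proof -
  obtain v w where "v \<in> V" "w \<in> V" "x = v y" "y = w u"
    using assms(2,3) unfolding reach_def by blast
  moreover have "v \<circ> w \<in> V" using assms(1) \<open>v \<in> V\<close> \<open>w \<in> V\<close> by (simp add: forest_algebra_def)
  ultimately show ?thesis unfolding reach_def by (intro bexI[of _ "v \<circ> w"]) simp_all
qed

lemma foldr_in_context:
  assumes "forest_algebra pl z V" and "x \<in> set xs"
  shows "\<exists>v\<in>V. foldr pl xs z = v x"
  using assms(2)
proof (induction xs)
  case (Cons y ys)
  show ?case
  proof (cases "x = y")
    case True
    then show ?thesis using assms(1) unfolding forest_algebra_def by auto
  next
    case False
    then obtain v where "v \<in> V" "foldr pl ys z = v x" using Cons by auto
    then show ?thesis
      using assms(1) unfolding forest_algebra_def by (intro bexI[of _ "pl y \<circ> v"]) auto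
  qed
qed simp

lemma reach_evalF_children:
  assumes "forest_algebra pl z V" and "is_hom V lab" and "Node a ts \<in> set s"
  shows "reach V (evalF pl z lab s) (evalF pl z lab ts)"
proof -
  have "evalT pl z lab (Node a ts) \<in> set (map (evalT pl z lab) s)"
    using assms(3) by (simp only: set_map) (rule imageI)
  then obtain v where "v \<in> V" "evalF pl z lab s = v (lab a (evalF pl z lab ts))"
    using foldr_in_context[OF assms(1)] by (fastforce simp: evalF_def)
  then show ?thesis
    using assms(1,2) unfolding forest_algebra_def is_hom_def reach_def
    by (intro bexI[of _ "v \<circ> lab a"]) auto
qed

lemma reach_wr_fst: "reach (wr_V V V') x y \<Longrightarrow> reach V (fst x) (fst y)"
  unfolding reach_def wr_V_def by auto

definition reach_class :: "('h \<Rightarrow> 'h) set \<Rightarrow> 'h \<Rightarrow> 'h set" where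
  "reach_class V h = {g. reach V g h \<and> reach V h g}"

definition reaches_class :: "('h \<Rightarrow> 'h) set \<Rightarrow> 'h \<Rightarrow> 'h set \<Rightarrow> bool" where
  "reaches_class V h \<Gamma> \<longleftrightarrow> (\<exists>g\<in>\<Gamma>. reach V g h)"

lemma reach_classes_eq: "reach_classes V = range (reach_class V)"
  by (auto simp: reach_classes_def reach_class_def)

lemma above_iff: "above V h \<Gamma> \<longleftrightarrow> reaches_class V h \<Gamma> \<and> h \<notin> \<Gamma>"
  by (simp add: above_def reaches_class_def)

lemma reaches_class_trans:
  assumes "forest_algebra pl z V" and "reaches_class V x \<Gamma>" and "reach V x y"
  shows "reaches_class V y \<Gamma>"
  using assms(2) reach_trans[OF assms(1) _ assms(3)] unfolding reaches_class_def by blast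

lemma reaches_class_if_mem:
  assumes "forest_algebra pl z V" and "x \<in> \<Gamma>"
  shows "reaches_class V x \<Gamma>"
  using assms(2) reach_refl[OF assms(1)] unfolding reaches_class_def by blast

lemma reach_class_wr_fst: "x \<in> reach_class (wr_V V V') h \<Longrightarrow> fst x \<in> reach_class V (fst h)"
  unfolding reach_class_def using reach_wr_fst by blast

lemma reaches_class_wr_fst:
  "reaches_class (wr_V V V') x (reach_class (wr_V V V') h) \<Longrightarrow>
   reaches_class V (fst x) (reach_class V (fst h))"
  unfolding reaches_class_def using reach_wr_fst reach_class_wr_fst by blast

definition nonconfusing_at :: "('h \<Rightarrow> 'h \<Rightarrow> 'h) \<Rightarrow> 'h \<Rightarrow> ('h \<Rightarrow> 'h) set \<Rightarrow> ('a \<Rightarrow> 'h \<Rightarrow> 'h) \<Rightarrow> nat \<Rightarrow> bool" where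
  "nonconfusing_at pl z V lab k \<longleftrightarrow>
     (\<forall>\<Gamma>\<in>reach_classes V. \<forall>s1 s2. equiv_dkG pl z V lab k \<Gamma> s1 s2 \<longrightarrow> evalF pl z lab s1 = evalF pl z lab s2)"

lemma nonconfusing_iff: "nonconfusing pl z V lab \<longleftrightarrow> (\<exists>k>0. nonconfusing_at pl z V lab k)"
  by (simp add: nonconfusing_def nonconfusing_at_def)

lemma relabT_eq_map_tree:
  assumes closed: "\<And>a ts s. P s \<Longrightarrow> Node a ts \<in> set s \<Longrightarrow> P ts"
    and eq: "\<And>u. P u \<Longrightarrow> f u = F (g u)"
  shows "P (children t) \<Longrightarrow> relabT f t = map_tree (map_prod id F) (relabT g t)"
proof (induction t)
  case (Node a ts)
  have "relabT f t' = map_tree (map_prod id F) (relabT g t')" if "t' \<in> set ts" for t'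
  proof -
    have "P (children t')"
      using closed[of ts "root t'" "children t'"] Node.prems that by simp
    then show ?thesis using Node.IH that by blast
  qed
  then show ?case using Node.prems eq by (simp add: id_def)
qed

lemma relab_eq_map_tree:
  assumes closed: "\<And>a ts s. P s \<Longrightarrow> Node a ts \<in> set s \<Longrightarrow> P ts"
    and eq: "\<And>u. P u \<Longrightarrow> f u = F (g u)" and "P s"
  shows "relab f s = map (map_tree (map_prod id F)) (relab g s)"
proof -
  have "relabT f t = map_tree (map_prod id F) (relabT g t)" if "t \<in> set s" for t
    using relabT_eq_map_tree[where P=P and f=f and F=F and g=g, OF closed eq]
      closed[OF \<open>P s\<close>, of "root t" "children t"] that
    by simp
  then show ?thesis unfolding relab_def by simp
qed

definition project_cls :: "'h set \<Rightarrow> ('h \<times> 'g) option \<Rightarrow> 'h option" where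
  "project_cls \<Delta> x = Option.bind x (\<lambda>p. if fst p \<in> \<Delta> then None else Some (fst p))"

locale wreath_hom =
  fixes pl :: "'h \<Rightarrow> 'h \<Rightarrow> 'h" and z :: 'h and V :: "('h \<Rightarrow> 'h) set"
    and pl' :: "'g \<Rightarrow> 'g \<Rightarrow> 'g" and z' :: 'g and V' :: "('g \<Rightarrow> 'g) set"
    and \<beta> :: "'a \<Rightarrow> 'h \<Rightarrow> 'h" and \<gamma> :: "'a \<times> 'h \<Rightarrow> 'g \<Rightarrow> 'g"
  assumes fa: "forest_algebra pl z V" and fa': "forest_algebra pl' z' V'"
    and hom_\<beta>: "is_hom V \<beta>" and hom_\<gamma>: "is_hom V' \<gamma>"
begin

abbreviation "W \<equiv> wr_V V V'"
abbreviation "\<alpha> \<equiv> evalF (wr_plus pl pl') (z, z') (tensor \<beta> \<gamma>)"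
abbreviation "\<beta>\<^sub>F \<equiv> evalF pl z \<beta>"
abbreviation "\<delta>\<alpha> \<equiv> delta_cls (wr_plus pl pl') (z, z') W (tensor \<beta> \<gamma>)"
abbreviation "\<delta>\<beta> \<equiv> delta_cls pl z V \<beta>"

lemma fa_W: "forest_algebra (wr_plus pl pl') (z, z') W"
  using forest_algebra_wr[OF fa fa'] .

lemma fst_\<alpha>: "fst (\<alpha> s) = \<beta>\<^sub>F s"
  by (simp add: evalF_tensor)

lemma reaches_class_\<alpha>_children:
  "reaches_class W (\<alpha> s) \<Gamma> \<Longrightarrow> Node a ts \<in> set s \<Longrightarrow> reaches_class W (\<alpha> ts) \<Gamma>"
  using reaches_class_trans[OF fa_W] reach_evalF_children[OF fa_W is_hom_tensor[OF hom_\<beta> hom_\<gamma>]]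
  by blast

lemma delta_cls_\<beta>_project:
  assumes "reaches_class W (\<alpha> u) (reach_class W h)"
  shows "\<delta>\<beta> (reach_class V (fst h)) u = project_cls (reach_class V (fst h)) (\<delta>\<alpha> (reach_class W h) u)"
proof -
  have "reaches_class V (\<beta>\<^sub>F u) (reach_class V (fst h))"
    using reaches_class_wr_fst[OF assms] by (simp add: fst_\<alpha>)
  moreover have "\<beta>\<^sub>F u \<in> reach_class V (fst h)" if "\<alpha> u \<in> reach_class W h"
    using reach_class_wr_fst[OF that] by (simp add: fst_\<alpha>)
  ultimately show ?thesis
    using assms by (auto simp: delta_cls_def above_iff project_cls_def fst_\<alpha>)
qed

lemma relab_delta_cls_\<beta>:
  assumes "reaches_class W (\<alpha> s) (reach_class W h)"
  shows "relab (\<delta>\<beta> (reach_class V (fst h))) s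
           = map (map_tree (map_prod id (project_cls (reach_class V (fst h))))) (relab (\<delta>\<alpha> (reach_class W h)) s)"
  by (rule relab_eq_map_tree[where P="\<lambda>u. reaches_class W (\<alpha> u) (reach_class W h)"])
    (use assms reaches_class_\<alpha>_children delta_cls_\<beta>_project in auto)

lemma \<beta>_eq_if_simk:
  assumes nc: "nonconfusing_at pl z V \<beta> k"
    and in1: "\<alpha> s1 \<in> reach_class W h" and in2: "\<alpha> s2 \<in> reach_class W h"
    and sim: "simk k (relab (\<delta>\<alpha> (reach_class W h)) s1) (relab (\<delta>\<alpha> (reach_class W h)) s2)"
  shows "\<beta>\<^sub>F s1 = \<beta>\<^sub>F s2"
proof -
  have "simk k (relab (\<delta>\<beta> (reach_class V (fst h))) s1) (relab (\<delta>\<beta> (reach_class V (fst h))) s2)"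
    using simk_map_tree[OF sim] reaches_class_if_mem[OF fa_W] in1 in2
    by (simp add: relab_delta_cls_\<beta>)
  moreover have "\<beta>\<^sub>F s1 \<in> reach_class V (fst h)" "\<beta>\<^sub>F s2 \<in> reach_class V (fst h)"
    using reach_class_wr_fst[OF in1] reach_class_wr_fst[OF in2] by (simp_all add: fst_\<alpha>)
  ultimately show ?thesis
    using nc by (auto simp: nonconfusing_at_def reach_classes_eq equiv_dkG_def)
qed

lemma \<beta>_eq_if_same_label:
  assumes nc: "nonconfusing_at pl z V \<beta> k"
    and r1: "reaches_class W (\<alpha> ts) (reach_class W h)" and r2: "reaches_class W (\<alpha> us) (reach_class W h)"
    and lab: "\<delta>\<alpha> (reach_class W h) ts = \<delta>\<alpha> (reach_class W h) us"
    and sim: "simk k (relab (\<delta>\<alpha> (reach_class W h)) ts) (relab (\<delta>\<alpha> (reach_class W h)) us)"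
  shows "\<beta>\<^sub>F ts = \<beta>\<^sub>F us"
proof (cases "above W (\<alpha> ts) (reach_class W h)")
  case True
  then have "\<alpha> ts = \<alpha> us" using lab by (auto simp: delta_cls_def split: if_splits)
  then show ?thesis by (metis fst_\<alpha>)
next
  case False
  then have "\<not> above W (\<alpha> us) (reach_class W h)" using lab by (auto simp: delta_cls_def split: if_splits)
  then have "\<alpha> ts \<in> reach_class W h" "\<alpha> us \<in> reach_class W h"
    using False r1 r2 by (auto simp: above_iff)
  then show ?thesis using \<beta>_eq_if_simk[OF nc _ _ sim] by blast
qed

lemma root_labels_subset:
  assumes nc: "nonconfusing_at pl z V \<beta> k"
    and in1: "\<alpha> s1 \<in> reach_class W h" and in2: "\<alpha> s2 \<in> reach_class W h"
    and sim: "simk (Suc k) (relab (\<delta>\<alpha> (reach_class W h)) s1) (relab (\<delta>\<alpha> (reach_class W h)) s2)"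
  shows "set (map root (relab \<beta>\<^sub>F s1)) \<subseteq> set (map root (relab \<beta>\<^sub>F s2))"
proof
  let ?\<delta> = "\<delta>\<alpha> (reach_class W h)"
  fix x assume "x \<in> set (map root (relab \<beta>\<^sub>F s1))"
  then obtain t where "t \<in> set s1" and x_t: "x = root (relabT \<beta>\<^sub>F t)"
    unfolding relab_def by auto
  obtain a ts where "t = Node a ts" by (cases t)
  with \<open>t \<in> set s1\<close> x_t have t: "Node a ts \<in> set s1" and x: "x = (a, \<beta>\<^sub>F ts)"
    by simp_all
  have "relabT ?\<delta> (Node a ts) \<in> set (relab ?\<delta> s1)"
    using t unfolding relab_def set_map by (rule imageI)
  then obtain t' where "t' \<in> set (relab ?\<delta> s2)"
    and root_eq: "root (relabT ?\<delta> (Node a ts)) = root t'"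
    and sim_children: "simk k (children (relabT ?\<delta> (Node a ts))) (children t')"
    using sim simk.simps(2) by blast
  then obtain u where "u \<in> set s2" and "t' = relabT ?\<delta> u"
    unfolding relab_def by auto
  moreover obtain b us where "u = Node b us" by (cases u)
  ultimately have u: "Node a us \<in> set s2"
    and lab: "?\<delta> ts = ?\<delta> us" and sim': "simk k (relab ?\<delta> ts) (relab ?\<delta> us)"
    using root_eq sim_children by (simp_all add: relab_def)
  have "\<beta>\<^sub>F ts = \<beta>\<^sub>F us"
    using \<beta>_eq_if_same_label[OF nc _ _ lab sim']
      reaches_class_\<alpha>_children[OF reaches_class_if_mem[OF fa_W in1] t]
      reaches_class_\<alpha>_children[OF reaches_class_if_mem[OF fa_W in2] u]
    by blast
  then have "x = root (relabT \<beta>\<^sub>F (Node a us))"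
    using x by simp
  then show "x \<in> set (map root (relab \<beta>\<^sub>F s2))"
    using u unfolding relab_def by (metis image_eqI list.set_map map_map o_apply)
qed

lemma nonconfusing_at_tensor:
  assumes nc: "nonconfusing_at pl z V \<beta> k" and od: "one_definite pl' z' \<gamma>"
  shows "nonconfusing_at (wr_plus pl pl') (z, z') W (tensor \<beta> \<gamma>) (Suc k)"
  unfolding nonconfusing_at_def reach_classes_eq
proof (intro ballI allI impI)
  fix \<Gamma> s1 s2 assume "\<Gamma> \<in> range (reach_class W)"
    and "equiv_dkG (wr_plus pl pl') (z, z') W (tensor \<beta> \<gamma>) (Suc k) \<Gamma> s1 s2"
  then obtain h where in1: "\<alpha> s1 \<in> reach_class W h" and in2: "\<alpha> s2 \<in> reach_class W h"
    and sim: "simk (Suc k) (relab (\<delta>\<alpha> (reach_class W h)) s1) (relab (\<delta>\<alpha> (reach_class W h)) s2)"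
    unfolding equiv_dkG_def by blast
  have "\<beta>\<^sub>F s1 = \<beta>\<^sub>F s2"
    using \<beta>_eq_if_simk[OF nc in1 in2 simk_Suc_imp[OF sim]] .
  moreover have "set (map root (relab \<beta>\<^sub>F s1)) = set (map root (relab \<beta>\<^sub>F s2))"
    using root_labels_subset[OF nc in1 in2 sim] root_labels_subset[OF nc in2 in1 simk_sym[OF sim]]
    by (rule equalityI)
  then have "evalF pl' z' \<gamma> (relab \<beta>\<^sub>F s1) = evalF pl' z' \<gamma> (relab \<beta>\<^sub>F s2)"
    using od unfolding one_definite_def by blast
  ultimately show "\<alpha> s1 = \<alpha> s2"
    by (simp add: evalF_tensor)
qed

end

theorem lemma8:
  fixes pl :: "'h \<Rightarrow> 'h \<Rightarrow> 'h" and z :: 'h and V :: "('h \<Rightarrow> 'h) set"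
    and pl' :: "'g \<Rightarrow> 'g \<Rightarrow> 'g" and z' :: 'g and V' :: "('g \<Rightarrow> 'g) set"
    and \<beta> :: "'a \<Rightarrow> 'h \<Rightarrow> 'h" and \<gamma> :: "'a \<times> 'h \<Rightarrow> 'g \<Rightarrow> 'g"
  assumes "finite (UNIV :: 'a set)"
    and "finite (UNIV :: 'h set)" and "finite (UNIV :: 'g set)"
    and "forest_algebra pl z V" and "forest_algebra pl' z' V'"
    and "idem_comm pl" and "idem_comm pl'"
    and "is_hom V \<beta>" and "is_hom V' \<gamma>"
    and "nonconfusing pl z V \<beta>"
    and "one_definite pl' z' \<gamma>"
  shows "nonconfusing (wr_plus pl pl') (z, z') (wr_V V V') (tensor \<beta> \<gamma>)"
proof -
  interpret wreath_hom pl z V pl' z' V' \<beta> \<gamma>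
    using assms(4,5,8,9) by unfold_locales
  obtain k where "k > 0" and "nonconfusing_at pl z V \<beta> k"
    using assms(10) by (auto simp: nonconfusing_iff)
  then show ?thesis
    using nonconfusing_at_tensor[OF _ assms(11)] by (auto simp: nonconfusing_iff)
qed

end
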